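(* Let $P$ be a monotone irreducible positive recurrent stochastic kernel on $\mathbb{N}=\{1,2,\dots\}$ with stationary distribution $\pi$. Let $\overleftarrow{P}(x,y)=\pi(x)^{-1}P(y,x)\pi(y)$, $x,y\in\mathbb{N}$, be the time-reversed kernel, $\overleftarrow{X}=(\overleftarrow{X}_n)_{n\ge0}$ the Markov chain with kernel $\overleftarrow{P}$, and for $N\ge1$ let $\overleftarrow{\tau}_{(N)}=\inf\{n\ge0:\overleftarrow{X}_n\ge N\}$. Then $$\forall\, x,y\in\mathbb{N}:\quad \lim_{n,N\to\infty}\mathbb{P}_x\big(\overleftarrow{X}_n=y\,\big|\,\overleftarrow{\tau}_{(N)}>n\big)=\pi(y),$$ the limit being joint in $n$ and $N$.
   Context: A stochastic kernel $P$ on $\mathbb{N}$ is monotone if for every $y$ the map $x\mapsto\sum_{z\le y}P(x,z)$ is decreasing in $x$. $\pi$ is the (strictly positive) stationary probability of $P$. $\mathbb{P}_x$ denotes the law of the chain started at $x$. *)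

theory Defs
  imports "HOL-Probability.Probability"
begin

text \<open>State space is {1,2,...} (the naturals without 0). A Markov kernel is
  given as a map from states to probability mass functions; its value at 0 is irrelevant.\<close>

definition stoch_kernel :: "(nat \<Rightarrow> nat pmf) \<Rightarrow> bool" where
  "stoch_kernel K \<longleftrightarrow> (\<forall>x\<ge>1. set_pmf (K x) \<subseteq> {1..})"

primrec chain_path :: "(nat \<Rightarrow> nat pmf) \<Rightarrow> nat \<Rightarrow> nat \<Rightarrow> nat list pmf" where
  "chain_path K x 0 = return_pmf [x]"
| "chain_path K x (Suc n) =
     bind_pmf (chain_path K x n) (\<lambda>xs. map_pmf (\<lambda>y. xs @ [y]) (K (last xs)))"

definition monotone_kernel :: "(nat \<Rightarrow> nat pmf) \<Rightarrow> bool" where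
  "monotone_kernel K \<longleftrightarrow>
     (\<forall>y x x'. 1 \<le> x \<longrightarrow> x \<le> x' \<longrightarrow>
        measure_pmf.prob (K x') {..y} \<le> measure_pmf.prob (K x) {..y})"

definition irreducible_kernel :: "(nat \<Rightarrow> nat pmf) \<Rightarrow> bool" where
  "irreducible_kernel K \<longleftrightarrow>
     (\<forall>x\<ge>1. \<forall>y\<ge>1. \<exists>n. measure_pmf.prob (chain_path K x n) {xs. xs ! n = y} > 0)"

text \<open>Positive recurrence: E_x[T_x^+] = sum_n P_x(T_x^+ > n) is finite for every state x,
  where T_x^+ is the first return time to x.\<close>
definition positive_recurrent :: "(nat \<Rightarrow> nat pmf) \<Rightarrow> bool" where
  "positive_recurrent K \<longleftrightarrow>
     (\<forall>x\<ge>1. summable (\<lambda>n. measure_pmf.prob (chain_path K x n)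
                                {xs. \<forall>i\<in>{1..n}. xs ! i \<noteq> x}))"

definition stationary_prob :: "(nat \<Rightarrow> nat pmf) \<Rightarrow> (nat \<Rightarrow> real) \<Rightarrow> bool" where
  "stationary_prob K \<pi> \<longleftrightarrow>
     (\<forall>x\<ge>1. \<pi> x > 0) \<and> (\<pi> has_sum 1) {1..} \<and>
     (\<forall>y\<ge>1. ((\<lambda>x. \<pi> x * pmf (K x) y) has_sum \<pi> y) {1..})"

text \<open>P_x(X_n = y | tau_(N) > n), with tau_(N) = inf{n. X_n >= N}.\<close>
definition cond_prob_not_exited ::
  "(nat \<Rightarrow> nat pmf) \<Rightarrow> nat \<Rightarrow> nat \<Rightarrow> nat \<Rightarrow> nat \<Rightarrow> real" where
  "cond_prob_not_exited K x n N y =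
     measure_pmf.prob (chain_path K x n) {xs. xs ! n = y \<and> (\<forall>i\<le>n. xs ! i < N)} /
     measure_pmf.prob (chain_path K x n) {xs. \<forall>i\<le>n. xs ! i < N}"

end

theory Submission
  imports Defs
begin

text \<open>
  Let q be the n-step kernel of P killed on leaving the box {1..<N}. Time reversal expresses
  the conditioned law of the reversed chain as \<pi> y * q(y, x) / (sum over z of \<pi> z * q(z, x)),
  so it suffices that q(z, x) is close to q(1, x) for all z outside a set of small \<pi>-mass.
  Monotonicity survives the killing, so the killed chain started at z lies below the one
  started at 1 from the moment it hits 1, and the killed distribution function G of the chain
  started at 1 decreases in time. Hence |q(z, x) - q(1, x)| is at most (1 - h z) * G x, where
  h z is the probability of reaching 1 inside the box by time n. Recurrence and
  irreducibility make the \<pi>-mass of the states with h z far from 1 vanish as n and N grow,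
  while irreducibility and P(1, 1) > 0 (forced by monotonicity) keep q(1, x) above a fixed
  fraction of G x, uniformly in large n and N.
\<close>

lemma measure_bind_pmf:
  "measure_pmf.prob (bind_pmf M N) X = (\<integral>x. measure_pmf.prob (N x) X \<partial>measure_pmf M)"
  unfolding measure_pmf_bind
  by (rule measure_pmf.measure_bind[where N="count_space UNIV"])
     (auto simp: space_subprob_algebra measure_pmf.subprob_space_axioms)

lemma integrable_measure_pmf_bounded:
  fixes f :: "'a \<Rightarrow> real"
  shows "(\<And>x. \<bar>f x\<bar> \<le> B) \<Longrightarrow> integrable (measure_pmf p) f"
  by (rule measure_pmf.integrable_const_bound[where B=B]) auto

lemma integral_measure_pmf_nonzero_witness:
  fixes f :: "'a \<Rightarrow> real"
  assumes "(\<integral>u. f u \<partial>measure_pmf p) \<noteq> 0"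
  obtains u where "u \<in> set_pmf p" "f u \<noteq> 0"
proof -
  have "\<not> (AE u in measure_pmf p. f u = 0)"
    using assms integral_cong_AE[of f "measure_pmf p" "\<lambda>_. 0"] by auto
  then show ?thesis using that by (auto simp: AE_measure_pmf_iff)
qed

lemma sum_pmf_le_1: "finite A \<Longrightarrow> (\<Sum>u\<in>A. pmf p u) \<le> 1"
  by (metis measure_measure_pmf_finite measure_pmf.prob_le_1)

lemma sum_pmf_mult_le_integral:
  fixes f :: "'a \<Rightarrow> real"
  assumes "finite A" "\<And>u. 0 \<le> f u" "\<And>u. f u \<le> B"
  shows "(\<Sum>u\<in>A. pmf p u * f u) \<le> (\<integral>u. f u \<partial>measure_pmf p)"
proof -
  have bounded: "\<bar>f u\<bar> \<le> B" "\<bar>f u * indicator A u\<bar> \<le> B" for u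
    using assms(2,3)[of u] by (auto simp: indicator_def)
  have "(\<Sum>u\<in>A. pmf p u * f u) = (\<integral>u. f u * indicator A u \<partial>measure_pmf p)"
    by (subst integral_measure_pmf_real[OF assms(1)])
       (auto simp: indicator_def mult.commute intro!: sum.cong)
  also have "\<dots> \<le> (\<integral>u. f u \<partial>measure_pmf p)"
    using assms(2) bounded order_trans[OF assms(2,3)]
    by (intro integral_mono integrable_measure_pmf_bounded) (auto simp: indicator_def)
  finally show ?thesis .
qed

lemma sum_pmf_mult_le_single:
  fixes f :: "'a \<Rightarrow> real"
  assumes "finite S" "\<And>u. 0 \<le> f u" "\<And>u. f u \<le> 1"
  shows "(\<Sum>u\<in>S. pmf p u * f u) \<le> (if v \<in> S then pmf p v * f v else 0) + (1 - pmf p v)"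
proof -
  have rest: "(\<Sum>u\<in>S - {v}. pmf p u * f u) \<le> (\<Sum>u\<in>S - {v}. pmf p u)"
    using assms by (intro sum_mono) (auto intro: mult_right_le_one_le)
  have "(\<Sum>u\<in>insert v (S - {v}). pmf p u) \<le> 1"
    using assms(1) by (intro sum_pmf_le_1) simp
  then have total: "(\<Sum>u\<in>S - {v}. pmf p u) + pmf p v \<le> 1"
    using assms(1) by (subst (asm) sum.insert) auto
  show ?thesis
    using rest total assms(1) by (cases "v \<in> S") (auto simp: sum.remove)
qed

lemma pmf_atMost_tendsto_1:
  "(\<lambda>M. measure_pmf.prob p {..M::nat}) \<longlonglongrightarrow> 1"
proof -
  have "(\<lambda>M. measure_pmf.prob p {..M}) \<longlonglongrightarrow> measure_pmf.prob p (\<Union>M. {..M::nat})"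
    by (rule measure_pmf.finite_Lim_measure_incseq) (auto simp: incseq_def)
  moreover have "(\<Union>M. {..M::nat}) = UNIV" by auto
  ultimately show ?thesis by simp
qed

lemma sum_by_parts_atLeastLessThan:
  fixes p f :: "nat \<Rightarrow> real"
  shows "(\<Sum>u\<in>{1..<N}. p u * f u) =
     (\<Sum>v\<in>{1..<N}. (f v - f (Suc v)) * (\<Sum>u\<in>{1..v}. p u)) + f N * (\<Sum>u\<in>{1..<N}. p u)"
proof (induction N)
  case (Suc N)
  show ?case
  proof (cases "N = 0")
    case False
    then have split: "{1..<Suc N} = insert N {1..<N}" "{1..N} = insert N {1..<N}" by auto
    have "(\<Sum>u\<in>{1..N}. p u) = p N + (\<Sum>u\<in>{1..<N}. p u)" unfolding split by simp
    then show ?thesis using Suc.IH unfolding split(1) by (simp add: algebra_simps)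
  qed simp
qed simp

lemma ratio_approx:
  fixes num den b e p :: real
  assumes "\<bar>num - b\<bar> \<le> e" "\<bar>den - b\<bar> \<le> e" "e \<le> b/2" "0 < b" "0 < p"
  shows "\<bar>p * num / den - p\<bar> \<le> 4 * p * e / b"
proof -
  have den: "den \<ge> b/2" using assms by linarith
  then have dpos: "den > 0" using assms by linarith
  have "p * num / den - p = p * (num - den) / den" using dpos by (simp add: field_simps)
  then have "\<bar>p * num / den - p\<bar> = p * \<bar>num - den\<bar> / den"
    using dpos assms by (simp add: abs_mult)
  also have "\<dots> \<le> p * (2 * e) / (b/2)"
    using assms dpos den by (intro frac_le mult_left_mono) auto
  finally show ?thesis by simp
qed

section \<open>Killed chains\<close>

lemma set_chain_path: "xs \<in> set_pmf (chain_path K x n) \<Longrightarrow> length xs = Suc n"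
  by (induction n arbitrary: xs) auto

lemma chain_path_Suc_first:
  "chain_path K x (Suc n) = bind_pmf (K x) (\<lambda>u. map_pmf ((#) x) (chain_path K u n))"
proof (induction n)
  case 0
  then show ?case by (simp add: bind_return_pmf map_pmf_def)
next
  case (Suc n)
  have step: "bind_pmf (map_pmf ((#) x) (chain_path K u n))
      (\<lambda>xs. map_pmf (\<lambda>y. xs @ [y]) (K (last xs))) = map_pmf ((#) x) (chain_path K u (Suc n))" for u
  proof -
    have "bind_pmf (map_pmf ((#) x) (chain_path K u n)) (\<lambda>xs. map_pmf (\<lambda>y. xs @ [y]) (K (last xs)))
        = bind_pmf (chain_path K u n) (\<lambda>ys. map_pmf ((#) x) (map_pmf (\<lambda>y. ys @ [y]) (K (last ys))))"
      by (auto simp: bind_map_pmf pmf.map_comp o_def dest!: set_chain_path intro!: bind_pmf_cong)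
    then show ?thesis by (simp add: map_bind_pmf)
  qed
  have "chain_path K x (Suc (Suc n)) =
      bind_pmf (chain_path K x (Suc n)) (\<lambda>xs. map_pmf (\<lambda>y. xs @ [y]) (K (last xs)))"
    by simp
  then show ?case by (simp only: Suc bind_assoc_pmf step)
qed

lemma all_le_Suc_conv: "(\<forall>i\<le>Suc n. P i) \<longleftrightarrow> P 0 \<and> (\<forall>i\<le>n. P (Suc i))"
  by (metis Suc_le_mono le0 not0_implies_Suc)

primrec killed_exp :: "(nat \<Rightarrow> nat pmf) \<Rightarrow> nat set \<Rightarrow> (nat \<Rightarrow> real) \<Rightarrow> nat \<Rightarrow> nat \<Rightarrow> real"
where
  "killed_exp K S f 0 z = (if z \<in> S then f z else 0)"
| "killed_exp K S f (Suc n) z =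
     (if z \<in> S then (\<integral>u. killed_exp K S f n u \<partial>measure_pmf (K z)) else 0)"

lemma killed_exp_outside: "z \<notin> S \<Longrightarrow> killed_exp K S f n z = 0"
  by (cases n) auto

lemma killed_exp_bounds:
  assumes "\<And>x. 0 \<le> f x" "\<And>x. f x \<le> 1"
  shows "0 \<le> killed_exp K S f n z \<and> killed_exp K S f n z \<le> 1"
proof (induction n arbitrary: z)
  case 0
  then show ?case using assms by simp
next
  case (Suc n)
  have "integrable (measure_pmf (K z)) (killed_exp K S f n)"
    using Suc by (intro integrable_measure_pmf_bounded[where B=1]) auto
  then have "(\<integral>u. killed_exp K S f n u \<partial>measure_pmf (K z)) \<le> (\<integral>u. 1 \<partial>measure_pmf (K z))"
    using Suc by (intro integral_mono) auto
  moreover have "0 \<le> (\<integral>u. killed_exp K S f n u \<partial>measure_pmf (K z))"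
    using Suc by (intro integral_nonneg_AE) auto
  ultimately show ?case by simp
qed

lemma killed_exp_Suc_pos_witness:
  assumes pos: "0 < killed_exp K S f (Suc m) u" and f_bounds: "\<And>x. 0 \<le> f x" "\<And>x. f x \<le> 1"
  obtains v where "u \<in> S" "v \<in> set_pmf (K u)" "0 < killed_exp K S f m v"
proof -
  have u: "u \<in> S" using pos by (auto split: if_splits)
  then have "(\<integral>v. killed_exp K S f m v \<partial>measure_pmf (K u)) \<noteq> 0" using pos by simp
  then obtain v where "v \<in> set_pmf (K u)" "killed_exp K S f m v \<noteq> 0"
    by (rule integral_measure_pmf_nonzero_witness)
  moreover have "0 \<le> killed_exp K S f m v" using killed_exp_bounds[of f, OF f_bounds] by blast
  ultimately show ?thesis using that u by simp
qed

lemma prob_chain_path_stays_in: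
  "measure_pmf.prob (chain_path K z n) {xs. (\<forall>i\<le>n. xs!i \<in> S) \<and> xs!n \<in> B}
     = killed_exp K S (indicator B) n z"
proof (induction n arbitrary: z)
  case 0
  then show ?case by (auto simp: indicator_def)
next
  case (Suc n)
  have "(#) z -` {xs. (\<forall>i\<le>Suc n. xs!i \<in> S) \<and> xs!(Suc n) \<in> B} =
     (if z \<in> S then {ys. (\<forall>i\<le>n. ys!i \<in> S) \<and> ys!n \<in> B} else {})"
    by (auto simp: all_le_Suc_conv)
  then show ?case
    by (simp only: chain_path_Suc_first measure_bind_pmf measure_map_pmf)
       (simp add: Suc)
qed

primrec killed_pow :: "(nat \<Rightarrow> nat pmf) \<Rightarrow> nat set \<Rightarrow> nat \<Rightarrow> nat \<Rightarrow> nat \<Rightarrow> real" where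
  "killed_pow K S 0 z w = (if z = w \<and> z \<in> S then 1 else 0)"
| "killed_pow K S (Suc n) z w =
     (if z \<in> S then (\<Sum>u\<in>S. pmf (K z) u * killed_pow K S n u w) else 0)"

lemma killed_pow_nonneg: "0 \<le> killed_pow K S n z w"
  by (induction n arbitrary: z) (auto intro!: sum_nonneg)

lemma killed_pow_outside: "z \<notin> S \<or> w \<notin> S \<Longrightarrow> killed_pow K S n z w = 0"
  by (induction n arbitrary: z) auto

lemma sum_killed_pow_0:
  assumes "z \<in> S" "finite S"
  shows "(\<Sum>w\<in>S. killed_pow K S 0 z w * f w) = f z"
proof -
  have "(\<Sum>w\<in>S. killed_pow K S 0 z w * f w) = (\<Sum>w\<in>S. if w = z then f w else 0)"
    by (intro sum.cong) auto
  then show ?thesis using assms by (simp add: sum.delta')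
qed

lemma sum_killed_pow_Suc:
  "z \<in> S \<Longrightarrow> (\<Sum>w\<in>S. killed_pow K S (Suc n) z w * f w) =
     (\<Sum>u\<in>S. pmf (K z) u * (\<Sum>w\<in>S. killed_pow K S n u w * f w))"
  by (auto simp: sum_distrib_left sum_distrib_right mult.assoc intro: sum.swap)

lemma killed_pow_add:
  assumes "finite S"
  shows "killed_pow K S (n + m) z w = (\<Sum>u\<in>S. killed_pow K S n z u * killed_pow K S m u w)"
proof (induction n arbitrary: z)
  case 0
  then show ?case
    using sum_killed_pow_0[OF _ assms, of z K "\<lambda>u. killed_pow K S m u w"]
    by (cases "z \<in> S") (auto simp: killed_pow_outside)
next
  case (Suc n)
  then show ?case
    using sum_killed_pow_Suc[of z S K n "\<lambda>u. killed_pow K S m u w"] by simp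
qed

lemma killed_pow_Suc_right:
  assumes "finite S"
  shows "killed_pow K S (Suc n) z w =
    (if w \<in> S then (\<Sum>u\<in>S. killed_pow K S n z u * pmf (K u) w) else 0)"
proof -
  have one: "killed_pow K S 1 u w = (if u \<in> S \<and> w \<in> S then pmf (K u) w else 0)" for u
  proof -
    have "(\<Sum>v\<in>S. pmf (K u) v * killed_pow K S 0 v w) = (\<Sum>v\<in>S. if v = w then pmf (K u) v else 0)"
      by (intro sum.cong) auto
    then show ?thesis using assms by (simp add: sum.delta')
  qed
  have "killed_pow K S (Suc n) z w = (\<Sum>u\<in>S. killed_pow K S n z u * killed_pow K S 1 u w)"
    using killed_pow_add[OF assms, of K n 1 z w] by (simp only: Suc_eq_plus1)
  also have "\<dots> = (if w \<in> S then (\<Sum>u\<in>S. killed_pow K S n z u * pmf (K u) w) else 0)"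
    by (simp only: one) (auto simp: killed_pow_outside intro!: sum.cong)
  finally show ?thesis .
qed

lemma killed_exp_eq_sum:
  assumes "finite S"
  shows "killed_exp K S f n z = (\<Sum>w\<in>S. killed_pow K S n z w * f w)"
proof (induction n arbitrary: z)
  case 0
  then show ?case using sum_killed_pow_0[OF _ assms] by (auto simp: killed_pow_outside)
next
  case (Suc n)
  show ?case
  proof (cases "z \<in> S")
    case True
    have "(\<integral>u. killed_exp K S f n u \<partial>measure_pmf (K z)) = (\<Sum>u\<in>S. killed_exp K S f n u * pmf (K z) u)"
      by (rule integral_measure_pmf_real[OF assms]) (metis killed_exp_outside)
    also have "\<dots> = (\<Sum>u\<in>S. pmf (K z) u * (\<Sum>w\<in>S. killed_pow K S n u w * f w))"
      by (simp add: Suc mult.commute)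
    finally show ?thesis
      using True sum_killed_pow_Suc[OF True] by simp
  qed (simp add: killed_pow_outside)
qed

lemma sum_killed_pow_le_killed_exp:
  assumes "finite S" "S \<subseteq> S'" "\<And>x. 0 \<le> f x" "\<And>x. f x \<le> 1"
  shows "(\<Sum>w\<in>S. killed_pow K S n z w * f w) \<le> killed_exp K S' f n z"
proof (induction n arbitrary: z)
  case 0
  then show ?case
    using sum_killed_pow_0[OF _ assms(1)] assms(2,3)
    by (cases "z \<in> S") (auto simp: killed_pow_outside)
next
  case (Suc n)
  show ?case
  proof (cases "z \<in> S")
    case True
    have "(\<Sum>u\<in>S. pmf (K z) u * (\<Sum>w\<in>S. killed_pow K S n u w * f w))
        \<le> (\<Sum>u\<in>S. pmf (K z) u * killed_exp K S' f n u)"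
      by (intro sum_mono mult_left_mono Suc) auto
    also have "\<dots> \<le> (\<integral>u. killed_exp K S' f n u \<partial>measure_pmf (K z))"
      using killed_exp_bounds[OF assms(3,4)]
      by (intro sum_pmf_mult_le_integral[where B=1] assms(1)) auto
    finally show ?thesis using True assms(2) sum_killed_pow_Suc[OF True] by auto
  next
    case False
    then show ?thesis using killed_exp_bounds[OF assms(3,4)] by (simp add: killed_pow_outside)
  qed
qed

lemma sum_killed_pow_le_1: "finite S \<Longrightarrow> (\<Sum>w\<in>S. killed_pow K S n z w) \<le> 1"
  using sum_killed_pow_le_killed_exp[of S UNIV "\<lambda>_. 1" K n z]
    killed_exp_bounds[where f="\<lambda>_. 1" and K=K and S=UNIV and n=n and z=z] by simp

lemma killed_pow_mono_set:
  assumes "S \<subseteq> S'" "finite S'"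
  shows "killed_pow K S n z w \<le> killed_pow K S' n z w"
proof (induction n arbitrary: z)
  case 0
  then show ?case using assms by auto
next
  case (Suc n)
  show ?case
  proof (cases "z \<in> S")
    case True
    have "(\<Sum>u\<in>S. pmf (K z) u * killed_pow K S n u w) \<le> (\<Sum>u\<in>S. pmf (K z) u * killed_pow K S' n u w)"
      by (intro sum_mono mult_left_mono Suc) auto
    also have "\<dots> \<le> (\<Sum>u\<in>S'. pmf (K z) u * killed_pow K S' n u w)"
      by (intro sum_mono2 assms) (auto intro!: mult_nonneg_nonneg killed_pow_nonneg)
    finally show ?thesis using True assms by auto
  qed (use killed_pow_nonneg[of K S' "Suc n" z w] in simp)
qed

lemma killed_pow_mult_le_add:
  assumes "finite S" "u \<in> S"
  shows "killed_pow K S a z u * killed_pow K S b u w \<le> killed_pow K S (a + b) z w"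
  unfolding killed_pow_add[OF assms(1)]
  by (rule member_le_sum[where f="\<lambda>u. killed_pow K S a z u * killed_pow K S b u w"])
     (auto simp: assms killed_pow_nonneg)

lemma self_loop_pow_le_killed_pow:
  assumes "finite S" "z \<in> S"
  shows "pmf (K z) z ^ k \<le> killed_pow K S k z z"
proof (induction k)
  case (Suc k)
  have "pmf (K z) z ^ Suc k \<le> pmf (K z) z * killed_pow K S k z z"
    using Suc by (simp add: mult_left_mono)
  also have "\<dots> \<le> (\<Sum>u\<in>S. pmf (K z) u * killed_pow K S k u z)"
    by (rule member_le_sum[where f="\<lambda>u. pmf (K z) u * killed_pow K S k u z"])
       (use assms in \<open>auto simp: killed_pow_nonneg\<close>)
  also have "\<dots> = killed_pow K S (Suc k) z z" using assms by simp
  finally show ?case .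
qed (use assms in simp)

lemma killed_pow_pos_mono_time:
  assumes "finite S" "z \<in> S" "0 < pmf (K z) z" "0 < killed_pow K S m u z" "m \<le> m'"
  shows "0 < killed_pow K S m' u z"
proof -
  have "0 < killed_pow K S m u z * pmf (K z) z ^ (m' - m)" using assms by simp
  also have "\<dots> \<le> killed_pow K S m u z * killed_pow K S (m' - m) z z"
    using assms by (intro mult_left_mono self_loop_pow_le_killed_pow killed_pow_nonneg)
  also have "\<dots> \<le> killed_pow K S m' u z"
    using killed_pow_mult_le_add[OF assms(1,2), of K m u "m' - m" z] assms(5) by simp
  finally show ?thesis .
qed

lemma killed_pow_remove_null:
  assumes "finite S" "\<And>z. z \<in> S - {0} \<Longrightarrow> pmf (K z) 0 = 0" "z \<noteq> 0"
  shows "killed_pow K S n z w = killed_pow K (S - {0}) n z w"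
  using assms(3)
proof (induction n arbitrary: z)
  case (Suc n)
  show ?case
  proof (cases "z \<in> S")
    case True
    then have "(\<Sum>u\<in>S. pmf (K z) u * killed_pow K S n u w)
        = (\<Sum>u\<in>S - {0}. pmf (K z) u * killed_pow K S n u w)"
      using Suc.prems by (intro sum.mono_neutral_right) (auto simp: assms)
    also have "\<dots> = (\<Sum>u\<in>S - {0}. pmf (K z) u * killed_pow K (S - {0}) n u w)"
      by (intro sum.cong refl) (simp add: Suc.IH)
    finally show ?thesis using Suc.prems True by auto
  qed simp
qed auto

lemma cond_prob_not_exited_eq_killed_pow:
  assumes null: "\<And>z. z \<ge> 1 \<Longrightarrow> pmf (K z) 0 = 0" and x: "x \<in> {1..<N}" and y: "y \<in> {1..<N}"
  shows "cond_prob_not_exited K x n N y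
           = killed_pow K {1..<N} n x y / (\<Sum>w\<in>{1..<N}. killed_pow K {1..<N} n x w)"
proof -
  txt \<open>The event allows the junk state 0, which K never visits from {1..}.\<close>
  have "{..<N} - {0} = {1..<N}" by auto
  then have drop_0: "killed_pow K {..<N} n x w = killed_pow K {1..<N} n x w" for w
    using killed_pow_remove_null[of "{..<N}" K x n w] null x by simp
  have event_num: "{xs. xs ! n = y \<and> (\<forall>i\<le>n. xs ! i < N)} = {xs. (\<forall>i\<le>n. xs!i \<in> {..<N}) \<and> xs!n \<in> {y}}"
    by auto
  have num: "measure_pmf.prob (chain_path K x n) {xs. xs ! n = y \<and> (\<forall>i\<le>n. xs ! i < N)}
      = killed_pow K {1..<N} n x y"
    unfolding event_num prob_chain_path_stays_in
    using y by (simp add: killed_exp_eq_sum indicator_def sum.delta' drop_0)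
  have event_den: "{xs. \<forall>i\<le>n. xs ! i < N} = {xs. (\<forall>i\<le>n. xs!i \<in> {..<N}) \<and> xs!n \<in> UNIV}" by auto
  have "measure_pmf.prob (chain_path K x n) {xs. \<forall>i\<le>n. xs ! i < N}
      = (\<Sum>w\<in>{..<N}. killed_pow K {1..<N} n x w)"
    unfolding event_den prob_chain_path_stays_in by (simp add: killed_exp_eq_sum drop_0)
  also have "\<dots> = (\<Sum>w\<in>{1..<N}. killed_pow K {1..<N} n x w)"
    by (intro sum.mono_neutral_right) (auto simp: killed_pow_outside)
  finally show ?thesis unfolding cond_prob_not_exited_def num by simp
qed

lemma killed_pow_reversal:
  assumes "finite S"
    and balance: "\<And>x u. x \<in> S \<Longrightarrow> u \<in> S \<Longrightarrow> \<pi> x * pmf (K' x) u = \<pi> u * pmf (K u) x"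
  shows "\<pi> x * killed_pow K' S n x y = \<pi> y * killed_pow K S n y x"
proof (induction n arbitrary: x)
  case (Suc n)
  show ?case
  proof (cases "x \<in> S")
    case True
    have "\<pi> x * killed_pow K' S (Suc n) x y = (\<Sum>u\<in>S. (\<pi> x * pmf (K' x) u) * killed_pow K' S n u y)"
      using True by (simp add: sum_distrib_left mult.assoc)
    also have "\<dots> = (\<Sum>u\<in>S. pmf (K u) x * (\<pi> y * killed_pow K S n y u))"
      using True by (intro sum.cong refl) (simp add: balance Suc.IH[symmetric] mult_ac)
    also have "\<dots> = \<pi> y * killed_pow K S (Suc n) y x"
      using True by (subst killed_pow_Suc_right[OF assms(1)]) (simp add: sum_distrib_left mult_ac)
    finally show ?thesis .
  qed (simp add: killed_pow_outside)
qed auto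

primrec hit_one :: "(nat \<Rightarrow> nat pmf) \<Rightarrow> nat \<Rightarrow> nat \<Rightarrow> nat \<Rightarrow> real" where
  "hit_one K N 0 z = (if z = 1 then 1 else 0)"
| "hit_one K N (Suc n) z = (if z = 1 then 1
     else if z \<in> {1..<N} then (\<Sum>u\<in>{1..<N}. pmf (K z) u * hit_one K N n u) else 0)"

lemma hit_one_bounds: "0 \<le> hit_one K N n z \<and> hit_one K N n z \<le> 1"
proof (induction n arbitrary: z)
  case (Suc n)
  have "(\<Sum>u\<in>{1..<N}. pmf (K z) u * hit_one K N n u) \<le> (\<Sum>u\<in>{1..<N}. pmf (K z) u)"
    using Suc by (intro sum_mono) (auto intro: mult_left_le)
  also have "\<dots> \<le> 1" by (rule sum_pmf_le_1) simp
  finally show ?case using Suc by (auto intro!: sum_nonneg)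
qed simp

lemma hit_one_le_Suc: "hit_one K N n z \<le> hit_one K N (Suc n) z"
proof (induction n arbitrary: z)
  case 0
  then show ?case using hit_one_bounds[of K N 1 z] by auto
next
  case (Suc n)
  have "(\<Sum>u\<in>{1..<N}. pmf (K z) u * hit_one K N n u) \<le> (\<Sum>u\<in>{1..<N}. pmf (K z) u * hit_one K N (Suc n) u)"
    by (intro sum_mono mult_left_mono Suc.IH) auto
  then show ?case by (simp only: hit_one.simps(2)) auto
qed

lemma hit_one_mono_time: "n \<le> n' \<Longrightarrow> hit_one K N n z \<le> hit_one K N n' z"
  using lift_Suc_mono_le[of "\<lambda>n. hit_one K N n z", OF hit_one_le_Suc] by blast

lemma hit_one_mono_bound: "N \<le> N' \<Longrightarrow> hit_one K N n z \<le> hit_one K N' n z"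
proof (induction n arbitrary: z)
  case (Suc n)
  show ?case
  proof (cases "z \<noteq> 1 \<and> z \<in> {1..<N}")
    case True
    have "(\<Sum>u\<in>{1..<N}. pmf (K z) u * hit_one K N n u) \<le> (\<Sum>u\<in>{1..<N}. pmf (K z) u * hit_one K N' n u)"
      by (intro sum_mono mult_left_mono Suc) auto
    also have "\<dots> \<le> (\<Sum>u\<in>{1..<N'}. pmf (K z) u * hit_one K N' n u)"
      using Suc.prems by (intro sum_mono2) (auto simp: hit_one_bounds)
    finally show ?thesis using True Suc.prems by auto
  qed (use hit_one_bounds[of K N' "Suc n" z] in auto)
qed simp

lemma hit_one_mono: "n \<le> n' \<Longrightarrow> N \<le> N' \<Longrightarrow> hit_one K N n z \<le> hit_one K N' n' z"
  using hit_one_mono_time[of n n' K N z] hit_one_mono_bound[of N N' K n' z] by linarith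

definition killed_cdf :: "(nat \<Rightarrow> nat pmf) \<Rightarrow> nat \<Rightarrow> nat \<Rightarrow> nat \<Rightarrow> nat \<Rightarrow> real" where
  "killed_cdf K N n z w = (\<Sum>u\<in>{1..<N} \<inter> {..w}. killed_pow K {1..<N} n z u)"

lemma killed_cdf_nonneg: "0 \<le> killed_cdf K N n z w"
  unfolding killed_cdf_def by (auto intro!: sum_nonneg killed_pow_nonneg)

lemma killed_cdf_outside: "z \<notin> {1..<N} \<Longrightarrow> killed_cdf K N n z w = 0"
  unfolding killed_cdf_def by (auto simp: killed_pow_outside)

lemma killed_cdf_0: "killed_cdf K N 0 z w = (if z \<in> {1..<N} \<and> z \<le> w then 1 else 0)"
proof -
  have "killed_cdf K N 0 z w = (\<Sum>u\<in>{1..<N} \<inter> {..w}. if u = z then 1 else 0)"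
    unfolding killed_cdf_def by (intro sum.cong) auto
  then show ?thesis by (simp add: sum.delta')
qed

lemma killed_cdf_Suc:
  "z \<in> {1..<N} \<Longrightarrow> killed_cdf K N (Suc n) z w = (\<Sum>u\<in>{1..<N}. pmf (K z) u * killed_cdf K N n u w)"
  unfolding killed_cdf_def by (auto simp: sum_distrib_left intro: sum.swap)

lemma killed_cdf_diff:
  "x \<in> {1..<N} \<Longrightarrow> killed_cdf K N n z x = killed_pow K {1..<N} n z x + killed_cdf K N n z (x - 1)"
proof -
  assume x: "x \<in> {1..<N}"
  then have "{1..<N} \<inter> {..x} = insert x ({1..<N} \<inter> {..x - 1})" by auto
  then show ?thesis unfolding killed_cdf_def using x by (simp only:) (subst sum.insert; auto)
qed

lemma killed_cdf_mult_le_killed_pow: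
  assumes c: "0 \<le> c" "\<And>u. u \<in> {1..x} \<Longrightarrow> c \<le> killed_pow K {1..<N} j u x"
  shows "c * killed_cdf K N m z x \<le> killed_pow K {1..<N} (m + j) z x"
proof -
  have "c * killed_cdf K N m z x = (\<Sum>u\<in>{1..<N} \<inter> {..x}. killed_pow K {1..<N} m z u * c)"
    by (simp add: killed_cdf_def sum_distrib_left mult.commute)
  also have "\<dots> \<le> (\<Sum>u\<in>{1..<N} \<inter> {..x}. killed_pow K {1..<N} m z u * killed_pow K {1..<N} j u x)"
    using c by (intro sum_mono mult_left_mono) (auto simp: killed_pow_nonneg)
  also have "\<dots> \<le> (\<Sum>u\<in>{1..<N}. killed_pow K {1..<N} m z u * killed_pow K {1..<N} j u x)"
    by (intro sum_mono2) (auto intro: mult_nonneg_nonneg killed_pow_nonneg)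
  also have "\<dots> = killed_pow K {1..<N} (m + j) z x" by (rule killed_pow_add[symmetric]) simp
  finally show ?thesis .
qed

locale stochastic_chain =
  fixes P :: "nat \<Rightarrow> nat pmf"
  assumes stoch: "stoch_kernel P"
begin

lemma set_pmf_P: "z \<ge> 1 \<Longrightarrow> set_pmf (P z) \<subseteq> {1..}"
  using stoch unfolding stoch_kernel_def by auto

lemma pmf_P_0: "z \<ge> 1 \<Longrightarrow> pmf (P z) 0 = 0"
  using set_pmf_P by (auto simp: set_pmf_eq)

lemma sum_pmf_P_atLeastAtMost:
  assumes "z \<ge> 1"
  shows "(\<Sum>u\<in>{1..v}. pmf (P z) u) = measure_pmf.prob (P z) {..v}"
proof -
  have "{..v} = insert 0 {1..v}" by auto
  then show ?thesis by (simp add: measure_measure_pmf_finite pmf_P_0[OF assms])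
qed

lemma killed_pow_pos_of_killed_exp_pos:
  "u \<ge> 1 \<Longrightarrow> 0 < killed_exp P UNIV (indicator {w}) m u \<Longrightarrow> \<exists>N. 0 < killed_pow P {1..<N} m u w"
proof (induction m arbitrary: u)
  case 0
  then show ?case by (intro exI[of _ "Suc u"]) (auto simp: indicator_def split: if_splits)
next
  case (Suc m)
  obtain v where v: "v \<in> set_pmf (P u)" "0 < killed_exp P UNIV (indicator {w}) m v"
    using killed_exp_Suc_pos_witness[OF Suc.prems(2)] by auto
  have "v \<ge> 1" using set_pmf_P[OF Suc.prems(1)] v(1) by auto
  then obtain N' where N': "0 < killed_pow P {1..<N'} m v w" using Suc.IH v(2) by blast
  define N where "N = max N' (max (Suc u) (Suc v))"
  have "0 < pmf (P u) v * killed_pow P {1..<N'} m v w"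
    using v(1) N' by (simp add: set_pmf_eq')
  also have "\<dots> \<le> pmf (P u) v * killed_pow P {1..<N} m v w"
    by (intro mult_left_mono killed_pow_mono_set) (auto simp: N_def)
  also have "\<dots> \<le> (\<Sum>v'\<in>{1..<N}. pmf (P u) v' * killed_pow P {1..<N} m v' w)"
    using \<open>v \<ge> 1\<close> by (intro member_le_sum) (auto simp: N_def killed_pow_nonneg)
  also have "\<dots> = killed_pow P {1..<N} (Suc m) u w" using Suc.prems by (simp add: N_def)
  finally show ?case by blast
qed

definition survival :: "nat \<Rightarrow> nat \<Rightarrow> nat \<Rightarrow> real" where
  "survival N n z = (\<Sum>w\<in>{1..<N}. killed_pow P {1..<N} n z w)"

lemma survival_nonneg: "0 \<le> survival N n z"
  unfolding survival_def by (auto intro!: sum_nonneg killed_pow_nonneg)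

lemma survival_le_1: "survival N n z \<le> 1"
  unfolding survival_def by (rule sum_killed_pow_le_1) simp

lemma survival_0: "survival N 0 z = (if z \<in> {1..<N} then 1 else 0)"
  unfolding survival_def
  using sum_killed_pow_0[of z "{1..<N}" P "\<lambda>_. 1"] by (auto simp: killed_pow_outside)

lemma survival_Suc:
  "z \<in> {1..<N} \<Longrightarrow> survival N (Suc n) z = (\<Sum>u\<in>{1..<N}. pmf (P z) u * survival N n u)"
  unfolding survival_def using sum_killed_pow_Suc[of z "{1..<N}" P n "\<lambda>_. 1"] by simp

lemma survival_mono_bound: "N \<le> N' \<Longrightarrow> survival N n z \<le> survival N' n z"
proof -
  assume "N \<le> N'"
  then have sub: "{1..<N} \<subseteq> {1..<N'}" by auto
  have "(\<Sum>w\<in>{1..<N}. killed_pow P {1..<N} n z w) \<le> (\<Sum>w\<in>{1..<N}. killed_pow P {1..<N'} n z w)"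
    by (intro sum_mono killed_pow_mono_set sub) simp
  also have "\<dots> \<le> (\<Sum>w\<in>{1..<N'}. killed_pow P {1..<N'} n z w)"
    by (intro sum_mono2 sub) (auto simp: killed_pow_nonneg)
  finally show ?thesis by (simp add: survival_def)
qed

lemma ex_survival_ge: "z \<ge> 1 \<Longrightarrow> e > 0 \<Longrightarrow> \<exists>N. 1 - e \<le> survival N n z"
proof (induction n arbitrary: z e)
  case 0
  then show ?case by (intro exI[of _ "Suc z"]) (simp add: survival_0)
next
  case (Suc n)
  define d where "d = min (e / 2) (1 / 2)"
  have d: "0 < d" "d \<le> 1/2" "1 - e \<le> (1 - d) * (1 - d)"
    using Suc.prems by (auto simp: d_def min_def algebra_simps power2_eq_square)
  have "\<forall>\<^sub>F M in sequentially. 1 - d < measure_pmf.prob (P z) {..M}"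
    using d(1) by (intro order_tendstoD(1)[OF pmf_atMost_tendsto_1]) simp
  then obtain M where M: "1 - d < measure_pmf.prob (P z) {..M}"
    by (auto dest: eventually_happens)
  have "\<forall>u\<in>{1..M}. \<exists>N. 1 - d \<le> survival N n u" using Suc.IH d by auto
  then obtain Nu where Nu: "\<And>u. u \<in> {1..M} \<Longrightarrow> 1 - d \<le> survival (Nu u) n u" by metis
  define N where "N = Max (insert (Suc (max z M)) (Nu ` {1..M}))"
  have NM: "Suc (max z M) \<le> N" unfolding N_def by (rule Max_ge) auto
  have NNu: "u \<in> {1..M} \<Longrightarrow> Nu u \<le> N" for u unfolding N_def by (rule Max_ge) auto
  have z: "z \<in> {1..<N}" using NM Suc.prems by auto
  have "(1 - d) * (1 - d) \<le> (1 - d) * measure_pmf.prob (P z) {..M}"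
    using M d by (intro mult_left_mono) auto
  also have "\<dots> = (\<Sum>u\<in>{1..M}. pmf (P z) u) * (1 - d)"
    using sum_pmf_P_atLeastAtMost[OF Suc.prems(1), of M] by simp
  also have "\<dots> = (\<Sum>u\<in>{1..M}. pmf (P z) u * (1 - d))"
    by (rule sum_distrib_right)
  also have "\<dots> \<le> (\<Sum>u\<in>{1..M}. pmf (P z) u * survival N n u)"
  proof (intro sum_mono mult_left_mono)
    fix u assume "u \<in> {1..M}"
    then show "1 - d \<le> survival N n u"
      using Nu[of u] survival_mono_bound[OF NNu, of u n u] by linarith
  qed simp
  also have "\<dots> \<le> (\<Sum>u\<in>{1..<N}. pmf (P z) u * survival N n u)"
    using NM by (intro sum_mono2) (auto intro: mult_nonneg_nonneg survival_nonneg)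
  also have "\<dots> = survival N (Suc n) z" by (rule survival_Suc[OF z, symmetric])
  finally show ?case using d(3) by (intro exI[of _ N]) linarith
qed

definition avoid_one :: "nat \<Rightarrow> nat \<Rightarrow> real" where
  "avoid_one n u = killed_exp P (-{1}) (\<lambda>_. 1) n u"

lemma avoid_one_bounds: "0 \<le> avoid_one n u \<and> avoid_one n u \<le> 1"
  unfolding avoid_one_def by (rule killed_exp_bounds) auto

lemma survival_le_hit_one_add_avoid_one: "survival N n z \<le> hit_one P N n z + avoid_one n z"
proof (induction n arbitrary: z)
  case 0
  then show ?case by (simp add: survival_0 avoid_one_def)
next
  case (Suc n)
  show ?case
  proof (cases "z \<noteq> 1 \<and> z \<in> {1..<N}")
    case True
    have "survival N (Suc n) z = (\<Sum>u\<in>{1..<N}. pmf (P z) u * survival N n u)"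
      by (rule survival_Suc) (use True in simp)
    also have "\<dots> \<le> (\<Sum>u\<in>{1..<N}. pmf (P z) u * (hit_one P N n u + avoid_one n u))"
      by (intro sum_mono mult_left_mono Suc.IH) auto
    also have "\<dots> = hit_one P N (Suc n) z + (\<Sum>u\<in>{1..<N}. pmf (P z) u * avoid_one n u)"
      using True by (simp add: algebra_simps sum.distrib)
    also have "(\<Sum>u\<in>{1..<N}. pmf (P z) u * avoid_one n u) \<le> avoid_one (Suc n) z"
      using True avoid_one_bounds
      by (auto simp: avoid_one_def intro!: sum_pmf_mult_le_integral[where B=1])
    finally show ?thesis by simp
  qed (use survival_le_1[of N "Suc n" z] avoid_one_bounds[of "Suc n" z] in \<open>auto simp: survival_def killed_pow_outside\<close>)
qed

end

section \<open>Monotone kernels\<close>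

locale monotone_chain = stochastic_chain +
  assumes mono: "monotone_kernel P"
begin

lemma sum_pmf_P_atLeastAtMost_antimono:
  "1 \<le> z \<Longrightarrow> z \<le> z' \<Longrightarrow> (\<Sum>u\<in>{1..v}. pmf (P z') u) \<le> (\<Sum>u\<in>{1..v}. pmf (P z) u)"
  using mono sum_pmf_P_atLeastAtMost[of z v] sum_pmf_P_atLeastAtMost[of z' v]
  unfolding monotone_kernel_def by simp

text \<open>Stochastic monotonicity survives killing at the top: after summation by parts, the
  killed step is a nonnegative combination of distribution functions of P.\<close>

lemma killed_cdf_antimono: "1 \<le> z \<Longrightarrow> z \<le> z' \<Longrightarrow> killed_cdf P N n z' w \<le> killed_cdf P N n z w"
proof (induction n arbitrary: z z' w)
  case 0
  then show ?case by (auto simp: killed_cdf_0)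
next
  case (Suc n)
  show ?case
  proof (cases "z' \<in> {1..<N}")
    case True
    then have z: "z \<in> {1..<N}" using Suc.prems by auto
    define f where "f u = killed_cdf P N n u w" for u
    have by_parts: "(\<Sum>u\<in>{1..<N}. pmf (P y) u * f u) =
        (\<Sum>v\<in>{1..<N}. (f v - f (Suc v)) * (\<Sum>u\<in>{1..v}. pmf (P y) u))" for y
      using sum_by_parts_atLeastLessThan[of "pmf (P y)" f N] by (simp add: f_def killed_cdf_outside)
    have "killed_cdf P N (Suc n) z' w = (\<Sum>v\<in>{1..<N}. (f v - f (Suc v)) * (\<Sum>u\<in>{1..v}. pmf (P z') u))"
      using killed_cdf_Suc[OF True] by (simp only: f_def by_parts[unfolded f_def])
    also have "\<dots> \<le> (\<Sum>v\<in>{1..<N}. (f v - f (Suc v)) * (\<Sum>u\<in>{1..v}. pmf (P z) u))"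
    proof (rule sum_mono)
      fix v assume "v \<in> {1..<N}"
      then have "0 \<le> f v - f (Suc v)" using Suc.IH[of v "Suc v" w] by (simp add: f_def)
      then show "(f v - f (Suc v)) * (\<Sum>u\<in>{1..v}. pmf (P z') u) \<le> (f v - f (Suc v)) * (\<Sum>u\<in>{1..v}. pmf (P z) u)"
        by (rule mult_left_mono[OF sum_pmf_P_atLeastAtMost_antimono[OF Suc.prems]])
    qed
    also have "\<dots> = killed_cdf P N (Suc n) z w"
      using killed_cdf_Suc[OF z] by (simp only: f_def by_parts[unfolded f_def])
    finally show ?thesis .
  qed (simp add: killed_cdf_outside killed_cdf_nonneg)
qed

lemma killed_cdf_one_le_Suc: "killed_cdf P N (Suc n) 1 w \<le> killed_cdf P N n 1 w"
proof (cases "1 \<in> {1..<N}")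
  case True
  have "killed_cdf P N (Suc n) 1 w \<le> (\<Sum>u\<in>{1..<N}. pmf (P 1) u * killed_cdf P N n 1 w)"
    unfolding killed_cdf_Suc[OF True]
    by (intro sum_mono mult_left_mono killed_cdf_antimono) auto
  also have "\<dots> = (\<Sum>u\<in>{1..<N}. pmf (P 1) u) * killed_cdf P N n 1 w"
    by (simp add: sum_distrib_right)
  also have "\<dots> \<le> killed_cdf P N n 1 w"
    by (intro mult_left_le_one_le killed_cdf_nonneg sum_nonneg sum_pmf_le_1) auto
  finally show ?thesis .
qed (simp add: killed_cdf_outside)

lemma killed_cdf_one_antimono_time: "m \<le> n \<Longrightarrow> killed_cdf P N n 1 w \<le> killed_cdf P N m 1 w"
  using lift_Suc_antimono_le[of "\<lambda>n. killed_cdf P N n 1 w", OF killed_cdf_one_le_Suc] by blast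

text \<open>Coupling from 1: a chain started at z that hits 1 is, from then on, below the chain
  started at 1, whose distribution function decreases in time.\<close>

lemma hit_one_mult_killed_cdf_le: "hit_one P N n z * killed_cdf P N n 1 w \<le> killed_cdf P N n z w"
proof (induction n arbitrary: z)
  case (Suc n)
  show ?case
  proof (cases "z \<noteq> 1 \<and> z \<in> {1..<N}")
    case True
    have "hit_one P N (Suc n) z * killed_cdf P N (Suc n) 1 w \<le> hit_one P N (Suc n) z * killed_cdf P N n 1 w"
      by (rule mult_left_mono[OF killed_cdf_one_le_Suc]) (rule hit_one_bounds[THEN conjunct1])
    also have "\<dots> = (\<Sum>u\<in>{1..<N}. pmf (P z) u * hit_one P N n u) * killed_cdf P N n 1 w"
      using True by simp
    also have "\<dots> = (\<Sum>u\<in>{1..<N}. pmf (P z) u * (hit_one P N n u * killed_cdf P N n 1 w))"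
      by (simp add: sum_distrib_right mult.assoc)
    also have "\<dots> \<le> (\<Sum>u\<in>{1..<N}. pmf (P z) u * killed_cdf P N n u w)"
      by (intro sum_mono mult_left_mono Suc.IH) auto
    also have "\<dots> = killed_cdf P N (Suc n) z w"
      by (rule killed_cdf_Suc[symmetric]) (use True in simp)
    finally show ?thesis .
  qed (auto simp: killed_cdf_outside)
qed (simp add: killed_cdf_nonneg)

lemma killed_pow_diff_le:
  assumes x: "x \<in> {1..<N}" and z: "z \<in> {1..<N}"
  shows "\<bar>killed_pow P {1..<N} n z x - killed_pow P {1..<N} n 1 x\<bar>
           \<le> (1 - hit_one P N n z) * killed_cdf P N n 1 x"
proof -
  txt \<open>Both local masses are increments of distribution functions that are squeezed between
    t * G and G, with G the killed distribution function of the chain started at 1.\<close>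
  define t where "t = hit_one P N n z"
  define b where "b = killed_pow P {1..<N} n 1 x"
  define A where "A = killed_cdf P N n 1 (x - 1)"
  have cdf_1: "killed_cdf P N n 1 x = b + A"
    using killed_cdf_diff[OF x, of P n 1] by (simp add: b_def A_def)
  have "0 \<le> t" "t \<le> 1" "0 \<le> b" using hit_one_bounds killed_pow_nonneg by (auto simp: t_def b_def)
  then have "t * b \<le> b" by (intro mult_left_le_one_le)
  moreover have "killed_cdf P N n z x \<le> b + A" "killed_cdf P N n z (x - 1) \<le> A"
    using z killed_cdf_antimono[of 1 z N n x] killed_cdf_antimono[of 1 z N n "x - 1"] cdf_1
    by (auto simp: A_def)
  moreover have "t * (b + A) \<le> killed_cdf P N n z x" "t * A \<le> killed_cdf P N n z (x - 1)"
    using hit_one_mult_killed_cdf_le[of N n z x] hit_one_mult_killed_cdf_le[of N n z "x - 1"] cdf_1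
    by (simp_all add: t_def A_def)
  moreover have "killed_pow P {1..<N} n z x = killed_cdf P N n z x - killed_cdf P N n z (x - 1)"
    using killed_cdf_diff[OF x, of P n z] by simp
  ultimately have "\<bar>killed_pow P {1..<N} n z x - b\<bar> \<le> (1 - t) * (b + A)"
    by (simp add: abs_le_iff algebra_simps)
  then show ?thesis unfolding cdf_1 t_def b_def .
qed

end

section \<open>Recurrence\<close>

locale recurrent_chain = stochastic_chain +
  assumes irr: "irreducible_kernel P" and posrec: "positive_recurrent P"
begin

lemma ex_killed_exp_pos:
  assumes "x \<ge> 1" "y \<ge> 1"
  shows "\<exists>n. 0 < killed_exp P UNIV (indicator {y}) n x"
proof -
  obtain n where "0 < measure_pmf.prob (chain_path P x n) {xs. xs ! n = y}"
    using irr assms unfolding irreducible_kernel_def by blast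
  then show ?thesis using prob_chain_path_stays_in[of P x n UNIV "{y}"] by auto
qed

lemma ex_killed_pow_pos: "u \<ge> 1 \<Longrightarrow> w \<ge> 1 \<Longrightarrow> \<exists>m N. 0 < killed_pow P {1..<N} m u w"
  using ex_killed_exp_pos killed_pow_pos_of_killed_exp_pos by blast

lemma avoid_one_integral_tendsto_0: "(\<lambda>m. \<integral>u. avoid_one m u \<partial>measure_pmf (P 1)) \<longlonglongrightarrow> 0"
proof -
  have "(\<lambda>n. measure_pmf.prob (chain_path P 1 n) {xs. \<forall>i\<in>{1..n}. xs ! i \<noteq> 1}) \<longlonglongrightarrow> 0"
    using posrec unfolding positive_recurrent_def by (auto intro: summable_LIMSEQ_zero)
  then have "(\<lambda>m. measure_pmf.prob (chain_path P 1 (Suc m)) {xs. \<forall>i\<in>{1..Suc m}. xs ! i \<noteq> 1}) \<longlonglongrightarrow> 0"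
    by (rule LIMSEQ_Suc)
  moreover have "measure_pmf.prob (chain_path P 1 (Suc m)) {xs. \<forall>i\<in>{1..Suc m}. xs ! i \<noteq> 1}
      = (\<integral>u. avoid_one m u \<partial>measure_pmf (P 1))" for m
  proof -
    have preimage: "(#) 1 -` {xs. \<forall>i\<in>{1..Suc m}. xs ! i \<noteq> 1} =
        {ys. (\<forall>i\<le>m. ys!i \<in> -{1}) \<and> ys!m \<in> UNIV}"
      by (auto simp: Ball_def)
    show ?thesis
      by (simp only: chain_path_Suc_first measure_bind_pmf measure_map_pmf preimage
          prob_chain_path_stays_in) (simp add: avoid_one_def)
  qed
  ultimately show ?thesis by simp
qed

lemma ex_hit_one_after_first_step:
  assumes "e > 0"
  shows "\<exists>n N. 1 - e \<le> (\<Sum>u\<in>{1..<N}. pmf (P 1) u * hit_one P N n u)"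
proof -
  have "\<forall>\<^sub>F m in sequentially. (\<integral>u. avoid_one m u \<partial>measure_pmf (P 1)) < e / 2"
    using assms by (intro order_tendstoD(2)[OF avoid_one_integral_tendsto_0]) simp
  then obtain m where m: "(\<integral>u. avoid_one m u \<partial>measure_pmf (P 1)) < e / 2"
    by (auto dest: eventually_happens)
  obtain N0 where "1 - e/2 \<le> survival N0 (Suc m) 1" using ex_survival_ge[of 1 "e/2"] assms by auto
  define N where "N = max N0 2"
  then have N: "1 - e/2 \<le> survival N (Suc m) 1"
    using \<open>1 - e/2 \<le> survival N0 (Suc m) 1\<close> survival_mono_bound[of N0 N "Suc m" 1] by simp
  have "survival N (Suc m) 1 = (\<Sum>u\<in>{1..<N}. pmf (P 1) u * survival N m u)"
    by (rule survival_Suc) (simp add: N_def)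
  also have "\<dots> \<le> (\<Sum>u\<in>{1..<N}. pmf (P 1) u * (hit_one P N m u + avoid_one m u))"
    by (intro sum_mono mult_left_mono survival_le_hit_one_add_avoid_one) simp
  also have "\<dots> = (\<Sum>u\<in>{1..<N}. pmf (P 1) u * hit_one P N m u) + (\<Sum>u\<in>{1..<N}. pmf (P 1) u * avoid_one m u)"
    by (simp add: algebra_simps sum.distrib)
  also have "(\<Sum>u\<in>{1..<N}. pmf (P 1) u * avoid_one m u) \<le> (\<integral>u. avoid_one m u \<partial>measure_pmf (P 1))"
    by (rule sum_pmf_mult_le_integral[where B=1]) (auto simp: avoid_one_bounds)
  finally show ?thesis using N m by (intro exI[of _ m] exI[of _ N]) (simp add: N_def)
qed

definition hits_one_surely :: "nat \<Rightarrow> bool" where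
  "hits_one_surely z \<longleftrightarrow> (\<forall>e>0. \<exists>n N. 1 - e \<le> hit_one P N n z)"

lemma ex_hit_one_after_step:
  assumes w: "w \<ge> 1" "hits_one_surely w" and e: "e > 0"
  shows "\<exists>n N. 1 - e \<le> (\<Sum>u\<in>{1..<N}. pmf (P w) u * hit_one P N n u)"
proof (cases "w = 1")
  case True
  then show ?thesis using ex_hit_one_after_first_step[OF e] by simp
next
  case False
  have "0 < min e (1/2)" using e by simp
  then obtain n N where "1 - min e (1/2) \<le> hit_one P N n w"
    using w unfolding hits_one_surely_def by blast
  then have pos: "1 - min e (1/2) \<le> hit_one P N (Suc n) w"
    using hit_one_le_Suc[of P N n w] by linarith
  then have "w \<in> {1..<N}" using False by (auto split: if_splits)
  then have "hit_one P N (Suc n) w = (\<Sum>u\<in>{1..<N}. pmf (P w) u * hit_one P N n u)"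
    using False by simp
  then show ?thesis using pos by (intro exI[of _ n] exI[of _ N]) linarith
qed

lemma hits_one_surely_successor:
  assumes w: "w \<ge> 1" "hits_one_surely w" and v: "v \<in> set_pmf (P w)"
  shows "hits_one_surely v"
  unfolding hits_one_surely_def
proof (intro allI impI)
  fix e :: real assume e: "e > 0"
  define p where "p = pmf (P w) v"
  have p: "0 < p" "p \<le> 1" using v by (auto simp: p_def set_pmf_eq' pmf_le_1)
  obtain n N where nN: "1 - e * p \<le> (\<Sum>u\<in>{1..<N}. pmf (P w) u * hit_one P N n u)"
    using ex_hit_one_after_step[OF w, of "e * p"] e p by auto
  also have "\<dots> \<le> (if v \<in> {1..<N} then p * hit_one P N n v else 0) + (1 - p)"
    unfolding p_def by (rule sum_pmf_mult_le_single) (auto simp: hit_one_bounds)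
  finally have "p * (1 - e) \<le> p * hit_one P N n v \<or> p \<le> e * p"
    by (auto simp: algebra_simps split: if_splits)
  then have "1 - e \<le> hit_one P N n v \<or> 1 \<le> e"
    using p by (simp add: mult_le_cancel_left_pos)
  then show "\<exists>n N. 1 - e \<le> hit_one P N n v"
    using hit_one_bounds[of P N n v] by (intro exI[of _ n] exI[of _ N]) auto
qed

lemma hits_one_surely_reachable:
  "w \<ge> 1 \<Longrightarrow> hits_one_surely w \<Longrightarrow> 0 < killed_exp P UNIV (indicator {z}) m w \<Longrightarrow> hits_one_surely z"
proof (induction m arbitrary: w)
  case 0
  then show ?case by (auto simp: indicator_def split: if_splits)
next
  case (Suc m)
  obtain u where u: "u \<in> set_pmf (P w)" "0 < killed_exp P UNIV (indicator {z}) m u"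
    using killed_exp_Suc_pos_witness[OF Suc.prems(3)] by auto
  have "u \<ge> 1" using set_pmf_P[OF Suc.prems(1)] u(1) by auto
  moreover have "hits_one_surely u" using hits_one_surely_successor[OF Suc.prems(1,2) u(1)] .
  ultimately show ?case using Suc.IH u(2) by blast
qed

lemma hits_one_surely_all: "z \<ge> 1 \<Longrightarrow> hits_one_surely z"
proof -
  assume "z \<ge> 1"
  moreover have "hits_one_surely 1" unfolding hits_one_surely_def by (auto intro!: exI[of _ 0])
  ultimately show ?thesis using ex_killed_exp_pos[of 1 z] hits_one_surely_reachable by auto
qed


lemma ex_hit_one_uniform:
  assumes "finite F" "F \<subseteq> {1..}" "d > 0"
  shows "\<exists>n N. F \<subseteq> {1..<N} \<and> (\<forall>z\<in>F. 1 - d \<le> hit_one P N n z)"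
  using assms(1,2)
proof (induction F rule: finite_induct)
  case (insert z F)
  obtain n1 N1 where 1: "F \<subseteq> {1..<N1}" "\<forall>u\<in>F. 1 - d \<le> hit_one P N1 n1 u"
    using insert by auto
  obtain n2 N2 where 2: "1 - d \<le> hit_one P N2 n2 z"
    using hits_one_surely_all[of z] insert.prems assms(3) unfolding hits_one_surely_def by auto
  define n where "n = max n1 n2"
  define N where "N = max (max N1 N2) (Suc z)"
  have raise: "1 - d \<le> hit_one P N n u" if "1 - d \<le> hit_one P N' n' u" "n' \<le> n" "N' \<le> N" for u n' N'
    using that hit_one_mono[of n' n N' N P u] by linarith
  have "\<forall>u\<in>F. 1 - d \<le> hit_one P N n u" "1 - d \<le> hit_one P N n z"
    using 1(2) 2 raise[where n'=n1 and N'=N1] raise[where n'=n2 and N'=N2]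
    by (simp_all add: n_def N_def)
  moreover have "insert z F \<subseteq> {1..<N}" using 1(1) insert.prems by (auto simp: N_def subset_iff)
  ultimately show ?case by blast
qed simp

end

locale recurrent_monotone_chain = monotone_chain + recurrent_chain
begin

text \<open>If P(1,1) = 0, monotonicity forbids every state from jumping to 1, so 1 would be
  unreachable from 2.\<close>

lemma pmf_one_one_pos: "0 < pmf (P 1) 1"
proof (rule ccontr)
  assume no_loop: "\<not> 0 < pmf (P 1) 1"
  have no_jump: "pmf (P w) 1 = 0" if "w \<ge> 1" for w
  proof -
    have "pmf (P w) 1 \<le> pmf (P 1) 1" using sum_pmf_P_atLeastAtMost_antimono[of 1 w 1] that by simp
    then show ?thesis using no_loop pmf_nonneg[of "P w" 1] by linarith
  qed
  have "\<not> 0 < killed_exp P UNIV (indicator {1}) n z" if "z \<ge> 2" for n z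
    using that
  proof (induction n arbitrary: z)
    case (Suc n)
    show ?case
    proof
      assume "0 < killed_exp P UNIV (indicator {1}) (Suc n) z"
      then obtain v where v: "v \<in> set_pmf (P z)" "0 < killed_exp P UNIV (indicator {1}) n v"
        by (rule killed_exp_Suc_pos_witness) auto
      have "v \<ge> 1" using v(1) set_pmf_P[of z] Suc.prems by auto
      moreover have "v \<noteq> 1" using v(1) no_jump[of z] Suc.prems by (auto simp: set_pmf_eq)
      ultimately show False using Suc.IH[of v] v(2) by simp
    qed
  qed simp
  then show False using ex_killed_exp_pos[of 2 1] by auto
qed

text \<open>The self-loop at 1 absorbs the differences between the times at which the states
  u \<le> x reach 1, so all of them reach x at one common time.\<close>

lemma ex_uniform_time_killed_pow_pos:
  assumes "x \<ge> 1"
  shows "\<exists>j N0. 2 \<le> N0 \<and> (\<forall>u\<in>{1..x}. \<forall>N\<ge>N0. 0 < killed_pow P {1..<N} j u x)"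
proof -
  have "\<forall>u\<in>{1..x}. \<exists>m N. 0 < killed_pow P {1..<N} m u 1" using ex_killed_pow_pos by auto
  then obtain m Nu where to_one: "\<And>u. u \<in> {1..x} \<Longrightarrow> 0 < killed_pow P {1..<Nu u} (m u) u 1" by metis
  obtain l N' where from_one: "0 < killed_pow P {1..<N'} l 1 x"
    using ex_killed_pow_pos[of 1 x] assms by auto
  define J where "J = Max (m ` {1..x})"
  define N0 where "N0 = max (max N' 2) (Max (Nu ` {1..x}))"
  have N0: "max N' 2 \<le> N0" by (simp add: N0_def)
  have N0u: "Nu u \<le> N0" if "u \<in> {1..x}" for u
  proof -
    have "Nu u \<le> Max (Nu ` {1..x})" using that by (intro Max_ge) auto
    then show ?thesis by (simp add: N0_def)
  qed
  have "0 < killed_pow P {1..<N} (J + l) u x" if u: "u \<in> {1..x}" and N: "N0 \<le> N" for u N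
  proof -
    have mono: "N'' \<le> N \<Longrightarrow> killed_pow P {1..<N''} k v w \<le> killed_pow P {1..<N} k v w" for N'' k v w
      by (intro killed_pow_mono_set) auto
    have "Nu u \<le> N" using N0u[OF u] N by simp
    then have "0 < killed_pow P {1..<N} (m u) u 1"
      using to_one[OF u] mono[of "Nu u" "m u" u 1] by linarith
    moreover have "m u \<le> J" unfolding J_def using u by (intro Max_ge) auto
    moreover have one: "1 \<in> {1..<N}" using N0 N by simp
    ultimately have "0 < killed_pow P {1..<N} J u 1"
      using killed_pow_pos_mono_time[of "{1..<N}" 1 P "m u" u J] one pmf_one_one_pos by simp
    moreover have "0 < killed_pow P {1..<N} l 1 x"
      using from_one mono[of N' l 1 x] N0 N by linarith
    ultimately have "0 < killed_pow P {1..<N} J u 1 * killed_pow P {1..<N} l 1 x" by simp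
    also have "\<dots> \<le> killed_pow P {1..<N} (J + l) u x"
      using one by (intro killed_pow_mult_le_add) auto
    finally show ?thesis .
  qed
  then show ?thesis using N0 by (intro exI[of _ "J + l"] exI[of _ N0]) auto
qed

lemma ex_killed_cdf_le_killed_pow:
  assumes x: "x \<ge> 1"
  obtains c N0 j where "0 < c"
    and "\<And>N n. N0 \<le> N \<Longrightarrow> j \<le> n \<Longrightarrow> c * killed_cdf P N n 1 x \<le> killed_pow P {1..<N} n 1 x"
    and "\<And>N n. N0 \<le> N \<Longrightarrow> j \<le> n \<Longrightarrow> 0 < killed_pow P {1..<N} n 1 x"
proof -
  obtain j N0 where N0: "2 \<le> N0" and pos: "\<And>u N. u \<in> {1..x} \<Longrightarrow> N0 \<le> N \<Longrightarrow> 0 < killed_pow P {1..<N} j u x"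
    using ex_uniform_time_killed_pow_pos[OF x] by blast
  define c where "c = Min ((\<lambda>u. killed_pow P {1..<N0} j u x) ` {1..x})"
  have c: "0 < c" using pos x by (simp add: c_def)
  have bound: "c * killed_cdf P N n 1 x \<le> killed_pow P {1..<N} n 1 x" if "N0 \<le> N" "j \<le> n" for N n
  proof -
    have "c \<le> killed_pow P {1..<N} j u x" if "u \<in> {1..x}" for u
    proof -
      have "c \<le> killed_pow P {1..<N0} j u x" unfolding c_def using that by (intro Min_le) auto
      also have "\<dots> \<le> killed_pow P {1..<N} j u x" using \<open>N0 \<le> N\<close> by (intro killed_pow_mono_set) auto
      finally show ?thesis .
    qed
    then have "c * killed_cdf P N (n - j) 1 x \<le> killed_pow P {1..<N} (n - j + j) 1 x"
      using c by (intro killed_cdf_mult_le_killed_pow) auto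
    moreover have "c * killed_cdf P N n 1 x \<le> c * killed_cdf P N (n - j) 1 x"
      using c by (intro mult_left_mono killed_cdf_one_antimono_time) auto
    ultimately show ?thesis using \<open>j \<le> n\<close> by simp
  qed
  moreover have "0 < killed_pow P {1..<N} n 1 x" if "N0 \<le> N" "j \<le> n" for N n
  proof -
    have one: "1 \<in> {1..<N}" using N0 that by simp
    have "0 < pmf (P 1) 1 ^ n" using pmf_one_one_pos by simp
    also have "\<dots> \<le> killed_pow P {1..<N} n 1 1" using one by (intro self_loop_pow_le_killed_pow) auto
    also have "\<dots> \<le> killed_cdf P N n 1 x"
      unfolding killed_cdf_def using one x
      by (intro member_le_sum[where f="\<lambda>u. killed_pow P {1..<N} n 1 u"]) (auto simp: killed_pow_nonneg)
    finally have "0 < c * killed_cdf P N n 1 x" using c by simp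
    then show ?thesis using bound[OF that] by simp
  qed
  ultimately show ?thesis using c that by blast
qed

end

section \<open>The reversed chain\<close>

locale reversed_monotone_chain = recurrent_monotone_chain +
  fixes Prev :: "nat \<Rightarrow> nat pmf" and \<pi> :: "nat \<Rightarrow> real"
  assumes stat: "stationary_prob P \<pi>"
    and rev: "\<forall>x\<ge>1. \<forall>y\<ge>1. pmf (Prev x) y = \<pi> y * pmf (P y) x / \<pi> x"
begin

lemma pi_pos: "z \<ge> 1 \<Longrightarrow> 0 < \<pi> z"
  using stat unfolding stationary_prob_def by auto

lemma pi_nonneg: "z \<ge> 1 \<Longrightarrow> 0 \<le> \<pi> z"
  using pi_pos[of z] by simp

lemma has_sum_pi: "(\<pi> has_sum 1) {1..}"
  using stat unfolding stationary_prob_def by auto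

lemma sum_pi_le_1: "finite F \<Longrightarrow> F \<subseteq> {1..} \<Longrightarrow> sum \<pi> F \<le> 1"
  using pi_nonneg by (intro finite_sum_le_has_sum[OF has_sum_pi]) auto

lemma detailed_balance: "x \<ge> 1 \<Longrightarrow> u \<ge> 1 \<Longrightarrow> \<pi> x * pmf (Prev x) u = \<pi> u * pmf (P u) x"
  using rev pi_pos[of x] by auto

lemma pmf_Prev_0:
  assumes z: "z \<ge> 1"
  shows "pmf (Prev z) 0 = 0"
proof -
  have "((\<lambda>x. \<pi> x * pmf (P x) z / \<pi> z) has_sum (\<pi> z / \<pi> z)) {1..}"
    using stat z unfolding stationary_prob_def by (intro has_sum_divide_const) auto
  then have Prev_mass: "(pmf (Prev z) has_sum 1) {1..}"
    using pi_pos[OF z] rev z by (subst has_sum_cong[where g="\<lambda>x. \<pi> x * pmf (P x) z / \<pi> z"]) auto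
  have "pmf (Prev z) 0 \<le> e" if "e > 0" for e
  proof -
    obtain F where F: "finite F" "F \<subseteq> {1..}" "dist (sum (pmf (Prev z)) F) 1 \<le> e"
      using has_sum_finite_approximation[OF Prev_mass \<open>e > 0\<close>] by blast
    have "pmf (Prev z) 0 + sum (pmf (Prev z)) F = measure_pmf.prob (Prev z) (insert 0 F)"
      using F by (subst measure_measure_pmf_finite) (auto simp: sum.insert_if)
    also have "\<dots> \<le> 1" by simp
    finally show ?thesis using F(3) by (auto simp: dist_real_def)
  qed
  then show ?thesis by (metis antisym dense not_le pmf_nonneg)
qed

lemma cond_prob_reversed_eq:
  assumes x: "x \<in> {1..<N}" and y: "y \<in> {1..<N}"
  shows "cond_prob_not_exited Prev x n N y =
    \<pi> y * killed_pow P {1..<N} n y x / (\<Sum>z\<in>{1..<N}. \<pi> z * killed_pow P {1..<N} n z x)"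
proof -
  have "killed_pow Prev {1..<N} n x w = \<pi> w * killed_pow P {1..<N} n w x / \<pi> x" for w
    using killed_pow_reversal[where S="{1..<N}" and K'=Prev and K=P and n=n and x=x and y=w]
      detailed_balance pi_pos[of x] x
    by (simp add: field_simps)
  then have reversal: "killed_pow Prev {1..<N} n x = (\<lambda>w. \<pi> w * killed_pow P {1..<N} n w x / \<pi> x)"
    by auto
  have "cond_prob_not_exited Prev x n N y
      = killed_pow Prev {1..<N} n x y / (\<Sum>w\<in>{1..<N}. killed_pow Prev {1..<N} n x w)"
    by (rule cond_prob_not_exited_eq_killed_pow[OF pmf_Prev_0 x y])
  also have "\<dots> = \<pi> y * killed_pow P {1..<N} n y x / (\<Sum>z\<in>{1..<N}. \<pi> z * killed_pow P {1..<N} n z x)"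
    unfolding reversal using pi_pos[of x] x by (simp flip: sum_divide_distrib)
  finally show ?thesis .
qed

text \<open>The stationary mass outside the box counts as not having reached 1.\<close>

definition unhit_mass :: "nat \<Rightarrow> nat \<Rightarrow> real" where
  "unhit_mass n N = 1 - (\<Sum>z\<in>{1..<N}. \<pi> z * hit_one P N n z)"

lemma sum_pi_box_le_1: "(\<Sum>z\<in>{1..<N}. \<pi> z) \<le> 1"
  by (rule sum_pi_le_1) auto

lemma unhit_mass_nonneg: "0 \<le> unhit_mass n N"
proof -
  have "(\<Sum>z\<in>{1..<N}. \<pi> z * hit_one P N n z) \<le> (\<Sum>z\<in>{1..<N}. \<pi> z)"
    using pi_nonneg hit_one_bounds by (intro sum_mono mult_right_le_one_le) auto
  then show ?thesis using sum_pi_box_le_1[of N] by (simp add: unhit_mass_def)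
qed

lemma pi_mult_not_hit_le_unhit_mass:
  assumes "y \<in> {1..<N}"
  shows "\<pi> y * (1 - hit_one P N n y) \<le> unhit_mass n N"
proof -
  have "\<pi> y * (1 - hit_one P N n y) \<le> (\<Sum>z\<in>{1..<N}. \<pi> z * (1 - hit_one P N n z))"
    using assms pi_nonneg hit_one_bounds
    by (intro member_le_sum[where f="\<lambda>z. \<pi> z * (1 - hit_one P N n z)"] mult_nonneg_nonneg) auto
  also have "\<dots> \<le> unhit_mass n N"
    using sum_pi_box_le_1[of N] by (simp add: unhit_mass_def algebra_simps sum_subtractf)
  finally show ?thesis .
qed

lemma unhit_mass_antimono:
  assumes "n \<le> n'" "N \<le> N'"
  shows "unhit_mass n' N' \<le> unhit_mass n N"
proof -
  have "(\<Sum>z\<in>{1..<N}. \<pi> z * hit_one P N n z) \<le> (\<Sum>z\<in>{1..<N}. \<pi> z * hit_one P N' n' z)"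
    using assms pi_nonneg by (intro sum_mono mult_left_mono hit_one_mono) auto
  also have "\<dots> \<le> (\<Sum>z\<in>{1..<N'}. \<pi> z * hit_one P N' n' z)"
    using assms pi_nonneg hit_one_bounds by (intro sum_mono2 mult_nonneg_nonneg) auto
  finally show ?thesis by (simp add: unhit_mass_def)
qed

lemma ex_unhit_mass_le:
  assumes "e > 0"
  shows "\<exists>n N. unhit_mass n N \<le> e"
proof -
  define d where "d = min (e / 2) (1 / 2)"
  have d: "0 < d" "d \<le> 1/2" "1 - e \<le> (1 - d) * (1 - d)"
    using assms by (auto simp: d_def min_def algebra_simps power2_eq_square)
  obtain F where F: "finite F" "F \<subseteq> {1..}" "dist (sum \<pi> F) 1 \<le> d"
    using has_sum_finite_approximation[OF has_sum_pi d(1)] by blast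
  obtain n N where N: "F \<subseteq> {1..<N}" and hit: "\<And>z. z \<in> F \<Longrightarrow> 1 - d \<le> hit_one P N n z"
    using ex_hit_one_uniform[OF F(1,2) d(1)] by blast
  have "(1 - d) * (1 - d) \<le> (1 - d) * sum \<pi> F"
    using F(3) d by (intro mult_left_mono) (auto simp: dist_real_def)
  also have "\<dots> = (\<Sum>z\<in>F. \<pi> z * (1 - d))" by (simp add: sum_distrib_left mult.commute)
  also have "\<dots> \<le> (\<Sum>z\<in>F. \<pi> z * hit_one P N n z)"
    using F(2) pi_nonneg by (intro sum_mono mult_left_mono hit) auto
  also have "\<dots> \<le> (\<Sum>z\<in>{1..<N}. \<pi> z * hit_one P N n z)"
    using N pi_nonneg hit_one_bounds by (intro sum_mono2 mult_nonneg_nonneg) auto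
  finally show ?thesis using d(3) unfolding unhit_mass_def by (intro exI[of _ n] exI[of _ N]) linarith
qed

lemma unhit_mass_tendsto_0: "((\<lambda>(n, N). unhit_mass n N) \<longlongrightarrow> 0) (sequentially \<times>\<^sub>F sequentially)"
proof (rule order_tendstoI)
  fix a :: real assume "a < 0"
  then have "a < unhit_mass n N" for n N using unhit_mass_nonneg[of n N] by linarith
  then show "\<forall>\<^sub>F nN in sequentially \<times>\<^sub>F sequentially. a < (\<lambda>(n, N). unhit_mass n N) nN"
    by (simp add: split_beta)
next
  fix a :: real assume "0 < a"
  then obtain n0 N0 where "unhit_mass n0 N0 \<le> a / 2" using ex_unhit_mass_le[of "a / 2"] by auto
  then have "unhit_mass n N < a" if "max n0 N0 \<le> n" "max n0 N0 \<le> N" for n N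
    using that unhit_mass_antimono[of n0 n N0 N] \<open>0 < a\<close> by simp
  then show "\<forall>\<^sub>F nN in sequentially \<times>\<^sub>F sequentially. (\<lambda>(n, N). unhit_mass n N) nN < a"
    unfolding eventually_prod_sequentially by (intro exI[of _ "max n0 N0"]) auto
qed

lemma weighted_killed_pow_approx:
  assumes x: "x \<in> {1..<N}"
  shows "\<bar>(\<Sum>z\<in>{1..<N}. \<pi> z * killed_pow P {1..<N} n z x) - killed_pow P {1..<N} n 1 x\<bar>
           \<le> killed_cdf P N n 1 x * unhit_mass n N"
proof -
  define b where "b = killed_pow P {1..<N} n 1 x"
  define g where "g = killed_cdf P N n 1 x"
  define mass where "mass = (\<Sum>z\<in>{1..<N}. \<pi> z)"
  define hit where "hit = (\<Sum>z\<in>{1..<N}. \<pi> z * hit_one P N n z)"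
  define dev where "dev = (\<Sum>z\<in>{1..<N}. \<pi> z * (killed_pow P {1..<N} n z x - b))"
  have b: "0 \<le> b" "b \<le> g"
    using killed_pow_nonneg killed_cdf_diff[OF x, of P n 1] killed_cdf_nonneg[of P N n 1 "x - 1"]
    by (auto simp: b_def g_def)
  have mass: "mass \<le> 1" using sum_pi_box_le_1 by (simp add: mass_def)
  have "\<bar>dev\<bar> \<le> (\<Sum>z\<in>{1..<N}. \<pi> z * ((1 - hit_one P N n z) * g))"
    unfolding dev_def using killed_pow_diff_le[OF x] pi_nonneg
    by (intro order_trans[OF sum_abs] sum_mono) (auto simp: abs_mult b_def g_def intro: mult_left_mono)
  also have "\<dots> = g * (mass - hit)"
    by (simp add: mass_def hit_def algebra_simps sum_subtractf sum_distrib_left sum_distrib_right)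
  finally have dev: "\<bar>dev\<bar> \<le> g * (mass - hit)" .
  have "(\<Sum>z\<in>{1..<N}. \<pi> z * killed_pow P {1..<N} n z x) - b = dev - (1 - mass) * b"
    by (simp add: dev_def mass_def algebra_simps sum_subtractf sum_distrib_left sum_distrib_right)
  then have "\<bar>(\<Sum>z\<in>{1..<N}. \<pi> z * killed_pow P {1..<N} n z x) - b\<bar> \<le> \<bar>dev\<bar> + (1 - mass) * b"
    using abs_triangle_ineq4[of dev "(1 - mass) * b"] b mass by (simp add: abs_of_nonneg)
  also have "\<dots> \<le> g * (mass - hit) + (1 - mass) * g"
    using dev b mass by (intro add_mono mult_left_mono) auto
  also have "\<dots> = g * unhit_mass n N" by (simp add: unhit_mass_def hit_def algebra_simps)
  finally show ?thesis unfolding b_def g_def .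
qed

lemma cond_prob_reversed_error:
  assumes x: "x \<in> {1..<N}" and y: "y \<in> {1..<N}" and c: "0 < c"
    and comparable: "c * killed_cdf P N n 1 x \<le> killed_pow P {1..<N} n 1 x"
    and pos: "0 < killed_pow P {1..<N} n 1 x"
    and small: "unhit_mass n N \<le> c * \<pi> y / 2"
  shows "\<bar>cond_prob_not_exited Prev x n N y - \<pi> y\<bar> \<le> 4 * unhit_mass n N / c"
proof -
  define b where "b = killed_pow P {1..<N} n 1 x"
  define g where "g = killed_cdf P N n 1 x"
  define e where "e = g * unhit_mass n N / \<pi> y"
  have py: "0 < \<pi> y" "\<pi> y \<le> 1" using pi_pos sum_pi_le_1[of "{y}"] y by auto
  have g: "0 \<le> g" using killed_cdf_nonneg by (simp add: g_def)
  have E: "0 \<le> unhit_mass n N" by (rule unhit_mass_nonneg)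
  have "\<bar>killed_pow P {1..<N} n y x - b\<bar> \<le> (1 - hit_one P N n y) * g"
    using killed_pow_diff_le[OF x y] by (simp add: b_def g_def)
  also have "\<dots> = g * (\<pi> y * (1 - hit_one P N n y)) / \<pi> y" using py by simp
  also have "\<dots> \<le> e"
    unfolding e_def using pi_mult_not_hit_le_unhit_mass[OF y] g py
    by (intro divide_right_mono mult_left_mono) auto
  finally have num: "\<bar>killed_pow P {1..<N} n y x - b\<bar> \<le> e" .
  have "g * unhit_mass n N \<le> e"
    unfolding e_def using py g E by (simp add: le_divide_eq mult_right_le_one_le)
  then have den: "\<bar>(\<Sum>z\<in>{1..<N}. \<pi> z * killed_pow P {1..<N} n z x) - b\<bar> \<le> e"
    using weighted_killed_pow_approx[OF x, of n] unfolding b_def g_def by linarith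
  have "e \<le> g * (c * \<pi> y / 2) / \<pi> y"
    unfolding e_def using small g py by (intro divide_right_mono mult_left_mono) auto
  also have "\<dots> \<le> b / 2" using py comparable by (simp add: b_def g_def mult.commute)
  finally have "e \<le> b / 2" .
  then have "\<bar>\<pi> y * killed_pow P {1..<N} n y x / (\<Sum>z\<in>{1..<N}. \<pi> z * killed_pow P {1..<N} n z x) - \<pi> y\<bar>
      \<le> 4 * \<pi> y * e / b"
    using num den pos py by (intro ratio_approx) (auto simp: b_def)
  also have "\<dots> = 4 * unhit_mass n N * (g / b)" using py by (simp add: e_def)
  also have "\<dots> \<le> 4 * unhit_mass n N * (1 / c)"
    using E comparable c pos by (intro mult_left_mono) (auto simp: b_def g_def divide_simps mult.commute)
  finally show ?thesis by (simp add: cond_prob_reversed_eq[OF x y])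
qed

lemma eventually_cond_prob_reversed_error:
  assumes x: "x \<ge> 1" and y: "y \<ge> 1"
  obtains c where "0 < c"
    and "\<forall>\<^sub>F p in sequentially \<times>\<^sub>F sequentially.
           norm ((case p of (n, N) \<Rightarrow> cond_prob_not_exited Prev x n N y) - \<pi> y)
             \<le> (case p of (n, N) \<Rightarrow> 4 * unhit_mass n N / c)"
proof -
  obtain c N0 j where c: "0 < c"
    and comparable: "\<And>N n. N0 \<le> N \<Longrightarrow> j \<le> n \<Longrightarrow> c * killed_cdf P N n 1 x \<le> killed_pow P {1..<N} n 1 x"
    and pos: "\<And>N n. N0 \<le> N \<Longrightarrow> j \<le> n \<Longrightarrow> 0 < killed_pow P {1..<N} n 1 x"
    using ex_killed_cdf_le_killed_pow[OF x] by metis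
  define M where "M = max j (max N0 (Suc (max x y)))"
  have error: "\<bar>cond_prob_not_exited Prev x n N y - \<pi> y\<bar> \<le> 4 * unhit_mass n N / c"
    if "M \<le> n" "M \<le> N" "unhit_mass n N < c * \<pi> y / 2" for n N
    by (rule cond_prob_reversed_error[OF _ _ c comparable pos]) (use that x y in \<open>auto simp: M_def\<close>)
  have "\<forall>\<^sub>F p in sequentially \<times>\<^sub>F sequentially. (case p of (n, N) \<Rightarrow> unhit_mass n N) < c * \<pi> y / 2"
    by (rule order_tendstoD(2)[OF unhit_mass_tendsto_0]) (use c pi_pos[OF y] in simp)
  moreover have "\<forall>\<^sub>F p in sequentially \<times>\<^sub>F sequentially. (case p of (n, N) \<Rightarrow> M \<le> n \<and> M \<le> N)"
    unfolding eventually_prod_sequentially by (intro exI[of _ M]) auto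
  ultimately have "\<forall>\<^sub>F p in sequentially \<times>\<^sub>F sequentially.
      norm ((case p of (n, N) \<Rightarrow> cond_prob_not_exited Prev x n N y) - \<pi> y)
        \<le> (case p of (n, N) \<Rightarrow> 4 * unhit_mass n N / c)"
    by eventually_elim (auto split: prod.splits intro: error)
  then show ?thesis using c that by blast
qed

end

theorem proposition2:
  fixes P Prev :: "nat \<Rightarrow> nat pmf" and \<pi> :: "nat \<Rightarrow> real"
  assumes "stoch_kernel P"
    and "monotone_kernel P"
    and "irreducible_kernel P"
    and "positive_recurrent P"
    and "stationary_prob P \<pi>"
    and "\<forall>x\<ge>1. \<forall>y\<ge>1. pmf (Prev x) y = \<pi> y * pmf (P y) x / \<pi> x"
  shows "\<forall>x\<ge>1. \<forall>y\<ge>1.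
           ((\<lambda>(n, N). cond_prob_not_exited Prev x n N y) \<longlongrightarrow> \<pi> y)
             (sequentially \<times>\<^sub>F sequentially)"
proof (intro allI impI)
  interpret reversed_monotone_chain P Prev \<pi>
    by unfold_locales (use assms in auto)
  fix x y :: nat assume x: "x \<ge> 1" and y: "y \<ge> 1"
  obtain c where "0 < c" and error:
    "\<forall>\<^sub>F p in sequentially \<times>\<^sub>F sequentially.
       norm ((case p of (n, N) \<Rightarrow> cond_prob_not_exited Prev x n N y) - \<pi> y)
         \<le> (case p of (n, N) \<Rightarrow> 4 * unhit_mass n N / c)"
    by (rule eventually_cond_prob_reversed_error[OF x y])
  have "((\<lambda>p. case p of (n, N) \<Rightarrow> 4 * unhit_mass n N / c) \<longlongrightarrow> 0) (sequentially \<times>\<^sub>F sequentially)"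
    using tendsto_divide_zero[OF tendsto_mult_right_zero[OF unhit_mass_tendsto_0], of 4 c]
    by (simp add: case_prod_beta)
  then show "((\<lambda>(n, N). cond_prob_not_exited Prev x n N y) \<longlongrightarrow> \<pi> y) (sequentially \<times>\<^sub>F sequentially)"
    by (subst LIM_zero_iff[symmetric]) (rule Lim_null_comparison[OF error])
qed

end
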